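(* Assume Assumption A. Then the family of sequences $(\mu_N(\eta))_{N\ge1}$, $\eta\in E$, is ordered.
   Context: Setting: $E$ is a fixed finite set; for each $N\ge1$, $(\eta^N_t)$ is a continuous-time irreducible Markov chain on $E$ with jump rates $R_N(\eta,\xi)$ and unique invariant probability measure $\mu_N$. Ordered families: a finite family of sequences of positive reals $(a^r_N)_{N\ge1}$, $r\in\mathfrak R$, is ordered if for all $r\neq s$ the sequence $\arctan(a^r_N/a^s_N)$ converges as $N\to\infty$. Assumption A: (i) for each $\eta\neq\xi$, either $R_N(\eta,\xi)=0$ for all $N$ or $R_N(\eta,\xi)>0$ for all $N$; let $\mathbb B=\{(\eta,\xi):\eta\ne\xi,R_N(\eta,\xi)>0\}$. (ii) For every $m\ge1$ the family $\prod_{(\eta,\xi)\in\mathbb B}R_N(\eta,\xi)^{k(\eta,\xi)}$, indexed by $k:\mathbb B\to\mathbb Z_+$ with $\sum k=m$, is ordered. *)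

theory Defs
  imports Complex_Main
begin

text \<open>Sequences are indexed by N :: nat; only N \<ge> 1 matters.\<close>
definition ordered_family :: "'i set \<Rightarrow> ('i \<Rightarrow> nat \<Rightarrow> real) \<Rightarrow> bool" where
  "ordered_family I a \<longleftrightarrow> finite I \<and>
     (\<forall>r\<in>I. \<forall>N\<ge>1. a r N > 0) \<and>
     (\<forall>r\<in>I. \<forall>s\<in>I. r \<noteq> s \<longrightarrow> convergent (\<lambda>N. arctan (a r N / a s N)))"

definition jump_rel :: "('a \<Rightarrow> 'a \<Rightarrow> real) \<Rightarrow> ('a \<times> 'a) set" where
  "jump_rel R = {(x, y). x \<noteq> y \<and> R x y > 0}"

definition rate_matrix :: "('a \<Rightarrow> 'a \<Rightarrow> real) \<Rightarrow> bool" where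
  "rate_matrix R \<longleftrightarrow> (\<forall>x y. x \<noteq> y \<longrightarrow> R x y \<ge> 0)"

definition irreducible_rates :: "('a \<Rightarrow> 'a \<Rightarrow> real) \<Rightarrow> bool" where
  "irreducible_rates R \<longleftrightarrow> (\<forall>x y. x \<noteq> y \<longrightarrow> (x, y) \<in> (jump_rel R)\<^sup>+)"

text \<open>Invariant probability measure of the chain with rates R (global balance equations);
  diagonal entries of R play no role.\<close>
definition invariant_prob :: "('a::finite \<Rightarrow> 'a \<Rightarrow> real) \<Rightarrow> ('a \<Rightarrow> real) \<Rightarrow> bool" where
  "invariant_prob R \<mu> \<longleftrightarrow> (\<forall>x. \<mu> x \<ge> 0) \<and> (\<Sum>x\<in>UNIV. \<mu> x) = 1 \<and>
     (\<forall>y. (\<Sum>x\<in>UNIV - {y}. \<mu> x * R x y) = \<mu> y * (\<Sum>z\<in>UNIV - {y}. R y z))"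

definition bonds :: "(nat \<Rightarrow> 'a \<Rightarrow> 'a \<Rightarrow> real) \<Rightarrow> ('a \<times> 'a) set" where
  "bonds R = {(x, y). x \<noteq> y \<and> R 1 x y > 0}"

definition assumption_A :: "(nat \<Rightarrow> 'a::finite \<Rightarrow> 'a \<Rightarrow> real) \<Rightarrow> bool" where
  "assumption_A R \<longleftrightarrow>
     (\<forall>x y. x \<noteq> y \<longrightarrow> ((\<forall>N\<ge>1. R N x y = 0) \<or> (\<forall>N\<ge>1. R N x y > 0))) \<and>
     (\<forall>m\<ge>1. ordered_family
        {k :: 'a \<times> 'a \<Rightarrow> nat. (\<forall>p. p \<notin> bonds R \<longrightarrow> k p = 0) \<and> (\<Sum>p\<in>bonds R. k p) = m}
        (\<lambda>k N. \<Prod>p\<in>bonds R. R N (fst p) (snd p) ^ k p))"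

end

theory Submission
  imports Defs
begin

text \<open>By the Markov chain tree theorem, \<open>\<mu>\<^sub>N(\<eta>)\<close> is proportional to the sum, over spanning trees
  directed towards \<open>\<eta>\<close>, of the products of the rates along the tree edges; the constant of
  proportionality is fixed by uniqueness of the invariant measure. Each such product is a
  monomial of degree \<open>|E| - 1\<close> in the rates, and Assumption A orders these monomials. A ratio of
  two sums taken from an ordered family has a convergent arctangent: dividing by the dominant
  monomial, both sums converge, to limits that are not both zero.\<close>

lemma ordered_family_pos:
  assumes "ordered_family I a" "i \<in> I" "N \<ge> 1"
  shows "a i N > 0"
  using assms unfolding ordered_family_def by blast

lemma LIMSEQ_divide_self:
  fixes b :: "nat \<Rightarrow> real"
  assumes "\<And>N. N \<ge> 1 \<Longrightarrow> b N > 0"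
  shows "(\<lambda>N. b N / b N) \<longlonglongrightarrow> 1"
proof (rule tendsto_eventually)
  show "\<forall>\<^sub>F N in sequentially. b N / b N = 1"
    unfolding eventually_sequentially using assms by (metis less_irrefl divide_self)
qed

lemma tendsto_tan_of_tendsto_arctan:
  fixes x :: "nat \<Rightarrow> real"
  assumes "(\<lambda>N. arctan (x N)) \<longlonglongrightarrow> \<theta>" "-(pi/2) < \<theta>" "\<theta> < pi/2"
  shows "x \<longlonglongrightarrow> tan \<theta>"
proof -
  have "cos \<theta> \<noteq> 0" using assms(2,3) cos_gt_zero_pi by force
  then have "(\<lambda>N. tan (arctan (x N))) \<longlonglongrightarrow> tan \<theta>"
    by (intro isCont_tendsto_compose[OF isCont_tan] assms(1))
  then show ?thesis by (simp add: tan_arctan)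
qed

lemma arctan_divide_swap:
  fixes u v :: real
  assumes "u > 0" "v > 0"
  shows "arctan (u / v) = pi/2 - arctan (v / u)"
  using arctan_inverse[of "v / u"] assms by simp

lemma convergent_arctan_divide:
  fixes u v :: "nat \<Rightarrow> real"
  assumes u: "u \<longlonglongrightarrow> s" and v: "v \<longlonglongrightarrow> t" and "s \<ge> 0" "t \<ge> 0" "s > 0 \<or> t > 0"
    and pos: "\<forall>\<^sub>F N in sequentially. u N > 0 \<and> v N > 0"
  shows "convergent (\<lambda>N. arctan (u N / v N))"
proof (cases "t > 0")
  case True
  then have "(\<lambda>N. arctan (u N / v N)) \<longlonglongrightarrow> arctan (s / t)"
    by (intro tendsto_intros u v) auto
  then show ?thesis by (auto simp: convergent_def)
next
  case False
  with assms have "s > 0" by auto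
  then have "(\<lambda>N. pi/2 - arctan (v N / u N)) \<longlonglongrightarrow> pi/2 - arctan (t / s)"
    by (intro tendsto_intros u v) auto
  moreover have "\<forall>\<^sub>F N in sequentially. pi/2 - arctan (v N / u N) = arctan (u N / v N)"
    using pos by eventually_elim (metis arctan_divide_swap)
  ultimately show ?thesis
    unfolding convergent_def by (blast intro: Lim_transform_eventually)
qed

lemma ordered_family_ratio_convergent:
  assumes O: "ordered_family I a" and i: "i \<in> I" and j: "j \<in> I"
  shows "convergent (\<lambda>N. a i N / a j N) \<or> convergent (\<lambda>N. a j N / a i N)"
proof (cases "i = j")
  case True
  then show ?thesis
    using LIMSEQ_divide_self[of "a i"] ordered_family_pos[OF O i] by (auto simp: convergent_def)
next
  case False
  then obtain \<theta> where \<theta>: "(\<lambda>N. arctan (a i N / a j N)) \<longlonglongrightarrow> \<theta>"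
    using O i j unfolding ordered_family_def convergent_def by blast
  have pos: "\<forall>\<^sub>F N in sequentially. a i N > 0 \<and> a j N > 0"
    unfolding eventually_sequentially using ordered_family_pos[OF O] i j by blast
  have "\<theta> \<ge> 0"
    by (rule tendsto_lowerbound[OF \<theta>]) (use pos in \<open>auto elim: eventually_mono\<close>)
  moreover have "\<theta> \<le> pi/2"
    using tendsto_upperbound[OF \<theta>, of "pi/2"] arctan_ubound by (simp add: less_imp_le)
  ultimately consider "\<theta> < pi/2" | "\<theta> = pi/2" by linarith
  then show ?thesis
  proof cases
    case 1
    with \<open>\<theta> \<ge> 0\<close> have "(\<lambda>N. a i N / a j N) \<longlonglongrightarrow> tan \<theta>"
      by (intro tendsto_tan_of_tendsto_arctan[OF \<theta>]) auto
    then show ?thesis by (auto simp: convergent_def)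
  next
    case 2
    have "(\<lambda>N. pi/2 - arctan (a i N / a j N)) \<longlonglongrightarrow> 0"
      using tendsto_diff[OF tendsto_const \<theta>, of "pi/2"] 2 by simp
    moreover have "\<forall>\<^sub>F N in sequentially. pi/2 - arctan (a i N / a j N) = arctan (a j N / a i N)"
      using pos by eventually_elim (metis arctan_divide_swap)
    ultimately have "(\<lambda>N. arctan (a j N / a i N)) \<longlonglongrightarrow> 0"
      by (rule Lim_transform_eventually)
    then have "(\<lambda>N. a j N / a i N) \<longlonglongrightarrow> tan 0"
      by (intro tendsto_tan_of_tendsto_arctan) auto
    then show ?thesis by (auto simp: convergent_def)
  qed
qed

lemma ordered_family_dominant:
  assumes O: "ordered_family I a" and J: "finite J" "J \<noteq> {}" "J \<subseteq> I"
  shows "\<exists>M\<in>J. \<forall>i\<in>J. convergent (\<lambda>N. a i N / a M N)"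
  using J
proof (induction J rule: finite_ne_induct)
  case (singleton x)
  then show ?case
    using LIMSEQ_divide_self[of "a x"] ordered_family_pos[OF O, of x] by (auto simp: convergent_def)
next
  case (insert x F)
  then obtain M where M: "M \<in> F" "\<forall>i\<in>F. convergent (\<lambda>N. a i N / a M N)" by auto
  have x: "x \<in> I" and MI: "M \<in> I" using insert M by auto
  from ordered_family_ratio_convergent[OF O x MI] show ?case
  proof
    assume "convergent (\<lambda>N. a x N / a M N)"
    then show ?thesis using M by auto
  next
    assume xM: "convergent (\<lambda>N. a M N / a x N)"
    have "convergent (\<lambda>N. a i N / a x N)" if i: "i \<in> insert x F" for i
    proof (cases "i = x")
      case True
      then show ?thesis
        using LIMSEQ_divide_self[of "a x"] ordered_family_pos[OF O x] by (auto simp: convergent_def)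
    next
      case False
      then obtain L where L: "(\<lambda>N. a i N / a M N) \<longlonglongrightarrow> L"
        using M(2) i by (auto simp: convergent_def)
      obtain L' where L': "(\<lambda>N. a M N / a x N) \<longlonglongrightarrow> L'"
        using xM by (auto simp: convergent_def)
      have "\<forall>\<^sub>F N in sequentially. a i N / a M N * (a M N / a x N) = a i N / a x N"
        unfolding eventually_sequentially using ordered_family_pos[OF O MI] by force
      with tendsto_mult[OF L L'] show ?thesis
        unfolding convergent_def by (blast intro: Lim_transform_eventually)
    qed
    then show ?thesis by blast
  qed
qed

lemma ordered_family_dominant_limits:
  assumes O: "ordered_family I a" and J: "finite J" "J \<noteq> {}" "J \<subseteq> I"
  obtains M c where "M \<in> J" "\<And>i. i \<in> J \<Longrightarrow> (\<lambda>N. a i N / a M N) \<longlonglongrightarrow> c i"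
    "\<And>i. i \<in> J \<Longrightarrow> c i \<ge> 0" "c M = 1"
proof -
  have pos: "a i N > 0" if "i \<in> J" "N \<ge> 1" for i N
    using that J(3) ordered_family_pos[OF O] by blast
  obtain M where M: "M \<in> J" "\<forall>i\<in>J. convergent (\<lambda>N. a i N / a M N)"
    using ordered_family_dominant[OF O J] by blast
  define c where "c i = lim (\<lambda>N. a i N / a M N)" for i
  have c: "(\<lambda>N. a i N / a M N) \<longlonglongrightarrow> c i" if "i \<in> J" for i
    using M that by (simp add: c_def convergent_LIMSEQ_iff)
  moreover have "c i \<ge> 0" if "i \<in> J" for i
  proof (rule tendsto_lowerbound[OF c[OF that]])
    have "0 \<le> a i N / a M N" if "N \<ge> 1" for N
      using pos[OF \<open>i \<in> J\<close> that] pos[OF M(1) that] by simp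
    then show "\<forall>\<^sub>F N in sequentially. 0 \<le> a i N / a M N"
      unfolding eventually_sequentially by blast
  qed simp
  moreover have "c M = 1"
    using c[OF M(1)] LIMSEQ_divide_self[of "a M"] pos[OF M(1)] LIMSEQ_unique by blast
  ultimately show thesis using that M(1) by blast
qed

text \<open>Divide by the dominant member \<open>M\<close>: the normalised sums converge to limits that are
  nonnegative and, since the term of \<open>M\<close> itself tends to \<open>1\<close>, not both zero.\<close>
lemma ordered_family_sum_ratio:
  assumes O: "ordered_family I a" and A: "finite A" "A \<noteq> {}" and B: "finite B" "B \<noteq> {}"
    and \<phi>: "\<phi> ` A \<subseteq> I" and \<psi>: "\<psi> ` B \<subseteq> I"
  shows "convergent (\<lambda>N. arctan ((\<Sum>x\<in>A. a (\<phi> x) N) / (\<Sum>y\<in>B. a (\<psi> y) N)))"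
proof -
  define J where "J = \<phi> ` A \<union> \<psi> ` B"
  have J: "finite J" "J \<noteq> {}" "J \<subseteq> I" using A B \<phi> \<psi> by (auto simp: J_def)
  have pos: "a i N > 0" if "i \<in> J" "N \<ge> 1" for i N
    using that J(3) ordered_family_pos[OF O] by blast
  obtain M c where M: "M \<in> J" and c: "\<And>i. i \<in> J \<Longrightarrow> (\<lambda>N. a i N / a M N) \<longlonglongrightarrow> c i"
    and c_nonneg: "\<And>i. i \<in> J \<Longrightarrow> c i \<ge> 0" and c_M: "c M = 1"
    using ordered_family_dominant_limits[OF O J] by blast
  define s where "s = (\<Sum>x\<in>A. c (\<phi> x))"
  define t where "t = (\<Sum>y\<in>B. c (\<psi> y))"
  have s: "(\<lambda>N. (\<Sum>x\<in>A. a (\<phi> x) N) / a M N) \<longlonglongrightarrow> s"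
    unfolding s_def sum_divide_distrib by (intro tendsto_sum c) (auto simp: J_def)
  have t: "(\<lambda>N. (\<Sum>y\<in>B. a (\<psi> y) N) / a M N) \<longlonglongrightarrow> t"
    unfolding t_def sum_divide_distrib by (intro tendsto_sum c) (auto simp: J_def)
  have "s \<ge> 0" "t \<ge> 0"
    unfolding s_def t_def by (auto intro!: sum_nonneg c_nonneg simp: J_def)
  moreover have "s > 0 \<or> t > 0"
  proof -
    have "M \<in> \<phi> ` A \<or> M \<in> \<psi> ` B" using M by (simp add: J_def)
    then have "c M \<le> s \<or> c M \<le> t"
    proof (elim disjE imageE)
      fix x assume x: "x \<in> A" "M = \<phi> x"
      have "c (\<phi> x) \<le> s"
        unfolding s_def by (rule member_le_sum[OF x(1)]) (auto intro: c_nonneg A(1) simp: J_def)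
      with x(2) show ?thesis by simp
    next
      fix y assume y: "y \<in> B" "M = \<psi> y"
      have "c (\<psi> y) \<le> t"
        unfolding t_def by (rule member_le_sum[OF y(1)]) (auto intro: c_nonneg B(1) simp: J_def)
      with y(2) show ?thesis by simp
    qed
    then show ?thesis using c_M by linarith
  qed
  moreover have "\<forall>\<^sub>F N in sequentially.
      (\<Sum>x\<in>A. a (\<phi> x) N) / a M N > 0 \<and> (\<Sum>y\<in>B. a (\<psi> y) N) / a M N > 0"
  proof -
    have "(\<Sum>x\<in>A. a (\<phi> x) N) / a M N > 0 \<and> (\<Sum>y\<in>B. a (\<psi> y) N) / a M N > 0"
      if N: "N \<ge> 1" for N
    proof -
      have "(\<Sum>x\<in>A. a (\<phi> x) N) > 0" using A N by (intro sum_pos pos) (auto simp: J_def)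
      moreover have "(\<Sum>y\<in>B. a (\<psi> y) N) > 0" using B N by (intro sum_pos pos) (auto simp: J_def)
      ultimately show ?thesis using pos[OF M N] by simp
    qed
    then show ?thesis unfolding eventually_sequentially by blast
  qed
  ultimately have conv: "convergent (\<lambda>N. arctan (((\<Sum>x\<in>A. a (\<phi> x) N) / a M N) /
                                                ((\<Sum>y\<in>B. a (\<psi> y) N) / a M N)))"
    by (intro convergent_arctan_divide[OF s t])
  have "\<forall>\<^sub>F N in sequentially. arctan (((\<Sum>x\<in>A. a (\<phi> x) N) / a M N) / ((\<Sum>y\<in>B. a (\<psi> y) N) / a M N))
      = arctan ((\<Sum>x\<in>A. a (\<phi> x) N) / (\<Sum>y\<in>B. a (\<psi> y) N))"
    unfolding eventually_sequentially using pos[OF M] by (intro exI[of _ 1] allI impI) force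
  from convergent_cong[OF this] conv show ?thesis by blast
qed

text \<open>Spanning trees of \<open>B\<close> directed towards the root \<open>x\<close>, encoded by their parent maps; the
  root is its own parent.\<close>
definition rooted_trees :: "('a \<times> 'a) set \<Rightarrow> 'a \<Rightarrow> ('a \<Rightarrow> 'a) set" where
  "rooted_trees B x = {f. f x = x \<and> (\<forall>v. v \<noteq> x \<longrightarrow> (v, f v) \<in> B) \<and> (\<forall>v. \<exists>n. (f ^^ n) v = x)}"

text \<open>The functional graph of such a map has a single cycle, and it passes through \<open>z\<close>.\<close>
definition unicycles :: "('a \<times> 'a) set \<Rightarrow> 'a \<Rightarrow> ('a \<Rightarrow> 'a) set" where
  "unicycles B z = {g. (\<forall>v. (v, g v) \<in> B) \<and> (\<forall>v. \<exists>n. (g ^^ n) v = z)}"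

definition tree_weight :: "('a::finite \<Rightarrow> 'a \<Rightarrow> real) \<Rightarrow> 'a \<Rightarrow> ('a \<Rightarrow> 'a) \<Rightarrow> real" where
  "tree_weight r x f = (\<Prod>v\<in>UNIV - {x}. r v (f v))"

definition map_weight :: "('a::finite \<Rightarrow> 'a \<Rightarrow> real) \<Rightarrow> ('a \<Rightarrow> 'a) \<Rightarrow> real" where
  "map_weight r g = (\<Prod>v\<in>UNIV. r v (g v))"

definition tree_sum :: "('a \<times> 'a) set \<Rightarrow> ('a::finite \<Rightarrow> 'a \<Rightarrow> real) \<Rightarrow> 'a \<Rightarrow> real" where
  "tree_sum B r x = (\<Sum>f\<in>rooted_trees B x. tree_weight r x f)"

definition global_balance :: "('a::finite \<Rightarrow> 'a \<Rightarrow> real) \<Rightarrow> ('a \<Rightarrow> real) \<Rightarrow> bool" where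
  "global_balance r \<nu> \<longleftrightarrow> (\<forall>y. (\<Sum>x\<in>UNIV - {y}. \<nu> x * r x y) = \<nu> y * (\<Sum>z\<in>UNIV - {y}. r y z))"

lemma rooted_tree_root: "f \<in> rooted_trees B x \<Longrightarrow> f x = x"
  by (simp add: rooted_trees_def)

lemma rooted_tree_edge: "f \<in> rooted_trees B x \<Longrightarrow> v \<noteq> x \<Longrightarrow> (v, f v) \<in> B"
  by (simp add: rooted_trees_def)

lemma rooted_tree_reaches_root: "f \<in> rooted_trees B x \<Longrightarrow> \<exists>n. (f ^^ n) v = x"
  by (simp add: rooted_trees_def)

lemma unicycle_edge: "g \<in> unicycles B z \<Longrightarrow> (v, g v) \<in> B"
  by (simp add: unicycles_def)

lemma unicycle_reaches: "g \<in> unicycles B z \<Longrightarrow> \<exists>n. (g ^^ n) v = z"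
  by (simp add: unicycles_def)

lemma funpow_reaches_fun_upd:
  assumes "(g ^^ n) v = y"
  shows "\<exists>m. ((g(y := c)) ^^ m) v = y"
  using assms
proof (induction n arbitrary: v)
  case (Suc n)
  show ?case
  proof (cases "v = y")
    case False
    from Suc.prems have "(g ^^ n) (g v) = y" by (simp add: funpow_Suc_right del: funpow.simps)
    then obtain m where "((g(y := c)) ^^ m) (g v) = y" using Suc.IH by blast
    then have "((g(y := c)) ^^ Suc m) v = y"
      using False by (simp add: funpow_Suc_right del: funpow.simps)
    then show ?thesis by blast
  qed (auto intro: exI[of _ 0])
qed (auto intro: exI[of _ 0])

lemma map_weight_fun_upd: "map_weight r (f(x := u)) = tree_weight r x f * r x u"
proof -
  have "map_weight r (f(x := u)) = r x u * (\<Prod>v\<in>UNIV - {x}. r v ((f(x := u)) v))"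
    unfolding map_weight_def by (subst prod.remove[of _ x]) auto
  also have "(\<Prod>v\<in>UNIV - {x}. r v ((f(x := u)) v)) = tree_weight r x f"
    unfolding tree_weight_def by (intro prod.cong) auto
  finally show ?thesis by (simp only: mult.commute)
qed

lemma unicycle_of_tree_root_edge:
  assumes f: "f \<in> rooted_trees B z" and u: "(z, u) \<in> B"
  shows "f(z := u) \<in> unicycles B z"
  unfolding unicycles_def
proof (intro CollectI conjI allI)
  fix v
  show "(v, (f(z := u)) v) \<in> B"
    using u rooted_tree_edge[OF f] by (cases "v = z") auto
  obtain n where "(f ^^ n) v = z" using rooted_tree_reaches_root[OF f] by blast
  then show "\<exists>n. ((f(z := u)) ^^ n) v = z" by (rule funpow_reaches_fun_upd)
qed

lemma unicycle_of_tree_redirect_root: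
  assumes f: "f \<in> rooted_trees B y" and y: "(y, z) \<in> B"
  shows "f(y := z) \<in> unicycles B z"
  unfolding unicycles_def
proof (intro CollectI conjI allI)
  fix v
  show "(v, (f(y := z)) v) \<in> B"
    using y rooted_tree_edge[OF f] by (cases "v = y") auto
  obtain n where "(f ^^ n) v = y" using rooted_tree_reaches_root[OF f] by blast
  then obtain m where "((f(y := z)) ^^ m) v = y" by (metis funpow_reaches_fun_upd)
  then have "((f(y := z)) ^^ Suc m) v = z" by simp
  then show "\<exists>n. ((f(y := z)) ^^ n) v = z" by blast
qed

lemma tree_of_unicycle:
  assumes g: "g \<in> unicycles B z" and y: "\<exists>k. (g ^^ k) z = y"
  shows "g(y := y) \<in> rooted_trees B y"
  unfolding rooted_trees_def
proof (intro CollectI conjI allI impI)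
  fix v
  show "v \<noteq> y \<Longrightarrow> (v, (g(y := y)) v) \<in> B" using unicycle_edge[OF g] by simp
  obtain n k where "(g ^^ n) v = z" "(g ^^ k) z = y"
    using unicycle_reaches[OF g] y by blast
  then have "(g ^^ (k + n)) v = y" by (simp add: funpow_add)
  then show "\<exists>n. ((g(y := y)) ^^ n) v = y" by (rule funpow_reaches_fun_upd)
qed simp

text \<open>Cutting the edge leaving \<open>z\<close> turns a unicycle through \<open>z\<close> into a tree rooted at \<open>z\<close>.\<close>
lemma sum_unicycles_out_edge:
  "(\<Sum>p\<in>(SIGMA u:{u. (z, u) \<in> B}. rooted_trees B z). tree_weight r z (snd p) * r z (fst p))
     = (\<Sum>g\<in>unicycles B z. map_weight r g)"
proof (rule sum.reindex_bij_witness[where j = "\<lambda>(u, f). f(z := u)" and i = "\<lambda>g. (g z, g(z := z))"])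
  fix p assume "p \<in> (SIGMA u:{u. (z, u) \<in> B}. rooted_trees B z)"
  then obtain u f where p: "p = (u, f)" "(z, u) \<in> B" "f \<in> rooted_trees B z" by blast
  then show "(\<lambda>g. (g z, g(z := z))) ((\<lambda>(u, f). f(z := u)) p) = p"
    using rooted_tree_root[OF p(3)] by auto
  show "(\<lambda>(u, f). f(z := u)) p \<in> unicycles B z"
    using unicycle_of_tree_root_edge p by simp
  show "map_weight r ((\<lambda>(u, f). f(z := u)) p) = tree_weight r z (snd p) * r z (fst p)"
    using p by (simp add: map_weight_fun_upd)
next
  fix g assume g: "g \<in> unicycles B z"
  show "(\<lambda>(u, f). f(z := u)) (g z, g(z := z)) = g" by simp
  have "g(z := z) \<in> rooted_trees B z"
    by (rule tree_of_unicycle[OF g]) (rule exI[of _ 0], simp)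
  then show "(g z, g(z := z)) \<in> (SIGMA u:{u. (z, u) \<in> B}. rooted_trees B z)"
    using unicycle_edge[OF g] by simp
qed

text \<open>The predecessor of \<open>z\<close> on the cycle through \<open>z\<close>.\<close>
definition cycle_pred :: "('a \<Rightarrow> 'a) \<Rightarrow> 'a \<Rightarrow> 'a" where
  "cycle_pred g z = (g ^^ (LEAST k. g ((g ^^ k) z) = z)) z"

lemma cycle_pred_unicycle:
  assumes g: "g \<in> unicycles B z"
  shows "g (cycle_pred g z) = z" "\<exists>k. (g ^^ k) z = cycle_pred g z"
proof -
  obtain n where "(g ^^ n) (g z) = z" using unicycle_reaches[OF g] by blast
  then have "g ((g ^^ n) z) = z" by (simp add: funpow_swap1)
  then have "g ((g ^^ (LEAST k. g ((g ^^ k) z) = z)) z) = z" by (rule LeastI)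
  then show "g (cycle_pred g z) = z" by (simp add: cycle_pred_def)
  show "\<exists>k. (g ^^ k) z = cycle_pred g z" by (auto simp: cycle_pred_def)
qed

text \<open>Redirecting the root \<open>y\<close> of a tree to \<open>z\<close> closes a cycle, on which \<open>y\<close> precedes \<open>z\<close>:
  the path from \<open>z\<close> to \<open>y\<close> in the tree is unchanged and its first return to \<open>z\<close> is through \<open>y\<close>.\<close>
lemma cycle_pred_fun_upd:
  assumes f: "f \<in> rooted_trees B y" and "y \<noteq> z"
  shows "cycle_pred (f(y := z)) z = y"
proof -
  define g where "g = f(y := z)"
  have "\<exists>n. (f ^^ n) z = y" using rooted_tree_reaches_root[OF f] .
  define k0 where "k0 = (LEAST k. (f ^^ k) z = y)"
  have k0: "(f ^^ k0) z = y" unfolding k0_def by (rule LeastI_ex) fact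
  have before_k0: "(f ^^ k) z \<noteq> y" if "k < k0" for k
    using not_less_Least[of k "\<lambda>k. (f ^^ k) z = y"] that unfolding k0_def by blast
  have agree: "(g ^^ i) z = (f ^^ i) z" if "i \<le> k0" for i
    using that
  proof (induction i)
    case (Suc i)
    then have "(f ^^ i) z \<noteq> y" using before_k0 by simp
    with Suc show ?case by (simp add: g_def)
  qed simp
  have closes: "g ((g ^^ k0) z) = z" using agree[of k0] k0 by (simp add: g_def)
  have not_closed: "g ((g ^^ k) z) \<noteq> z" if "k < k0" for k
  proof
    assume "g ((g ^^ k) z) = z"
    then have "(f ^^ Suc k) z = z" using agree[of k] that before_k0[OF that] by (simp add: g_def)
    then have "(f ^^ (k0 - Suc k)) z = (f ^^ (k0 - Suc k + Suc k)) z"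
      by (simp only: funpow_add comp_def)
    also have "\<dots> = y" using that k0 by simp
    finally show False using before_k0[of "k0 - Suc k"] that by simp
  qed
  have "(LEAST k. g ((g ^^ k) z) = z) = k0"
    by (rule Least_equality) (use closes not_closed in \<open>auto simp: not_less[symmetric]\<close>)
  then show ?thesis using agree[of k0] k0 by (simp add: cycle_pred_def g_def)
qed

text \<open>Cutting the edge entering \<open>z\<close> along the cycle turns a unicycle through \<open>z\<close> into a tree rooted
  at a neighbour of \<open>z\<close>.\<close>
lemma sum_unicycles_in_edge:
  assumes irrefl: "\<And>a. (a, a) \<notin> B"
  shows "(\<Sum>p\<in>(SIGMA y:{y. (y, z) \<in> B}. rooted_trees B y). tree_weight r (fst p) (snd p) * r (fst p) z)
         = (\<Sum>g\<in>unicycles B z. map_weight r g)"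
proof (rule sum.reindex_bij_witness[where j = "\<lambda>(y, f). f(y := z)"
      and i = "\<lambda>g. (cycle_pred g z, g(cycle_pred g z := cycle_pred g z))"])
  fix p assume "p \<in> (SIGMA y:{y. (y, z) \<in> B}. rooted_trees B y)"
  then obtain y f where p: "p = (y, f)" "(y, z) \<in> B" "f \<in> rooted_trees B y" by blast
  have "y \<noteq> z" using p(2) irrefl by blast
  then show "(\<lambda>g. (cycle_pred g z, g(cycle_pred g z := cycle_pred g z))) ((\<lambda>(y, f). f(y := z)) p) = p"
    using p cycle_pred_fun_upd[OF p(3)] rooted_tree_root[OF p(3)] by auto
  show "(\<lambda>(y, f). f(y := z)) p \<in> unicycles B z"
    using unicycle_of_tree_redirect_root p by simp
  show "map_weight r ((\<lambda>(y, f). f(y := z)) p) = tree_weight r (fst p) (snd p) * r (fst p) z"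
    using p by (simp add: map_weight_fun_upd)
next
  fix g assume g: "g \<in> unicycles B z"
  define y where "y = cycle_pred g z"
  have gy: "g y = z" using cycle_pred_unicycle[OF g] by (simp add: y_def)
  show "(\<lambda>(y, f). f(y := z)) (cycle_pred g z, g(cycle_pred g z := cycle_pred g z)) = g"
    using gy by (simp add: y_def[symmetric] fun_upd_idem)
  have "(y, z) \<in> B" using unicycle_edge[OF g, of y] gy by simp
  moreover have "g(y := y) \<in> rooted_trees B y"
    using tree_of_unicycle[OF g] cycle_pred_unicycle(2)[OF g] by (simp add: y_def)
  ultimately show "(cycle_pred g z, g(cycle_pred g z := cycle_pred g z))
      \<in> (SIGMA y:{y. (y, z) \<in> B}. rooted_trees B y)"
    by (simp add: y_def)
qed

text \<open>The Markov chain tree theorem: the tree sums solve the global balance equations, both sides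
  at \<open>z\<close> being the total weight of the unicycles through \<open>z\<close>.\<close>
lemma global_balance_tree_sum:
  fixes r :: "'a::finite \<Rightarrow> 'a \<Rightarrow> real"
  assumes irrefl: "\<And>a. (a, a) \<notin> B" and zero: "\<And>a b. a \<noteq> b \<Longrightarrow> (a, b) \<notin> B \<Longrightarrow> r a b = 0"
  shows "global_balance r (tree_sum B r)"
  unfolding global_balance_def
proof
  fix z
  have "(\<Sum>y\<in>UNIV - {z}. tree_sum B r y * r y z)
      = (\<Sum>y\<in>{y. (y, z) \<in> B}. \<Sum>f\<in>rooted_trees B y. tree_weight r y f * r y z)"
    unfolding tree_sum_def sum_distrib_right
    by (rule sum.mono_neutral_right) (auto simp: zero irrefl)
  also have "\<dots> = (\<Sum>p\<in>(SIGMA y:{y. (y, z) \<in> B}. rooted_trees B y). tree_weight r (fst p) (snd p) * r (fst p) z)"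
    by (subst sum.Sigma) (auto simp: split_beta)
  also have "\<dots> = (\<Sum>g\<in>unicycles B z. map_weight r g)"
    using irrefl by (rule sum_unicycles_in_edge)
  also have "\<dots> = (\<Sum>p\<in>(SIGMA u:{u. (z, u) \<in> B}. rooted_trees B z). tree_weight r z (snd p) * r z (fst p))"
    by (rule sum_unicycles_out_edge[symmetric])
  also have "\<dots> = (\<Sum>u\<in>{u. (z, u) \<in> B}. \<Sum>f\<in>rooted_trees B z. tree_weight r z f * r z u)"
    by (subst sum.Sigma) (auto simp: split_beta)
  also have "\<dots> = (\<Sum>u\<in>UNIV - {z}. \<Sum>f\<in>rooted_trees B z. tree_weight r z f * r z u)"
  proof (rule sum.mono_neutral_left)
    show "\<forall>u\<in>UNIV - {z} - {u. (z, u) \<in> B}. (\<Sum>f\<in>rooted_trees B z. tree_weight r z f * r z u) = 0"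
    proof
      fix u assume "u \<in> UNIV - {z} - {u. (z, u) \<in> B}"
      then have "r z u = 0" using zero by auto
      then show "(\<Sum>f\<in>rooted_trees B z. tree_weight r z f * r z u) = 0" by simp
    qed
  qed (auto simp: irrefl)
  also have "\<dots> = tree_sum B r z * (\<Sum>u\<in>UNIV - {z}. r z u)"
    by (simp add: tree_sum_def sum_distrib_right sum_distrib_left)
  finally show "(\<Sum>y\<in>UNIV - {z}. tree_sum B r y * r y z) = tree_sum B r z * (\<Sum>u\<in>UNIV - {z}. r z u)" .
qed

text \<open>Breadth-first tree: each vertex points to a neighbour strictly closer to the root.\<close>
lemma rooted_trees_nonempty:
  assumes reach: "\<And>v. v \<noteq> x \<Longrightarrow> (v, x) \<in> B\<^sup>+"
  shows "rooted_trees B x \<noteq> {}"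
proof -
  define d where "d v = (LEAST n. (v, x) \<in> B ^^ n)" for v
  have "\<exists>n. (v, x) \<in> B ^^ n" for v
    using reach[of v] by (cases "v = x") (auto simp: rtrancl_power[symmetric] intro: exI[of _ 0])
  then have d: "(v, x) \<in> B ^^ d v" for v
    unfolding d_def by (rule LeastI_ex)
  have closer: "\<exists>w. (v, w) \<in> B \<and> d w < d v" if "v \<noteq> x" for v
  proof -
    have "d v \<noteq> 0" using d[of v] that by (intro notI) simp
    then obtain n where n: "d v = Suc n" using not0_implies_Suc by blast
    then obtain w where "(v, w) \<in> B" "(w, x) \<in> B ^^ n"
      using d[of v] relpow_Suc_D2 by metis
    moreover from this(2) have "d w \<le> n" unfolding d_def by (rule Least_le)
    ultimately show ?thesis using n by auto
  qed
  define f where "f v = (if v = x then x else SOME w. (v, w) \<in> B \<and> d w < d v)" for v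
  have f: "(v, f v) \<in> B \<and> d (f v) < d v" if "v \<noteq> x" for v
    using someI_ex[OF closer[OF that]] that by (simp add: f_def)
  have "\<exists>n. (f ^^ n) v = x" for v
  proof (induction v rule: measure_induct_rule[where f = d])
    case (less v)
    show ?case
    proof (cases "v = x")
      case False
      then obtain n where "(f ^^ n) (f v) = x" using less f by blast
      then have "(f ^^ Suc n) v = x" by (simp add: funpow_Suc_right del: funpow.simps)
      then show ?thesis by blast
    qed (auto intro: exI[of _ 0])
  qed
  then have "f \<in> rooted_trees B x"
    using f by (auto simp: rooted_trees_def f_def)
  then show ?thesis by blast
qed

lemma global_balance_zero_propagates:
  fixes r :: "'a::finite \<Rightarrow> 'a \<Rightarrow> real"
  assumes r: "rate_matrix r" and nonneg: "\<And>x. \<nu> x \<ge> 0" and bal: "global_balance r \<nu>"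
    and path: "(x, y) \<in> (jump_rel r)\<^sup>+" and y: "\<nu> y = 0"
  shows "\<nu> x = 0"
proof -
  have zero_step: "\<nu> u = 0" if "(u, w) \<in> jump_rel r" "\<nu> w = 0" for u w
  proof -
    have "(\<Sum>x\<in>UNIV - {w}. \<nu> x * r x w) = 0" using bal that(2) by (simp add: global_balance_def)
    moreover have "\<forall>x\<in>UNIV - {w}. \<nu> x * r x w \<ge> 0" using nonneg r by (simp add: rate_matrix_def)
    ultimately have "\<forall>x\<in>UNIV - {w}. \<nu> x * r x w = 0"
      using sum_nonneg_eq_0_iff[of "UNIV - {w}" "\<lambda>x. \<nu> x * r x w"] by simp
    moreover have "u \<noteq> w" "r u w > 0" using that(1) by (auto simp: jump_rel_def)
    ultimately have "\<nu> u * r u w = 0" by blast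
    with \<open>r u w > 0\<close> show ?thesis by simp
  qed
  from path y show ?thesis
    by (induction rule: converse_trancl_induct) (auto intro: zero_step)
qed

lemma global_balance_pos:
  fixes r :: "'a::finite \<Rightarrow> 'a \<Rightarrow> real"
  assumes r: "rate_matrix r" and irr: "irreducible_rates r"
    and nonneg: "\<And>x. \<nu> x \<ge> 0" and bal: "global_balance r \<nu>" and nz: "\<nu> z \<noteq> 0"
  shows "\<nu> x > 0"
proof (rule ccontr)
  assume "\<not> \<nu> x > 0"
  then have "\<nu> x = 0" using nonneg[of x] by simp
  then have "\<nu> z = 0"
  proof (cases "z = x")
    case False
    then have "(z, x) \<in> (jump_rel r)\<^sup>+" using irr by (simp add: irreducible_rates_def)
    then show ?thesis using global_balance_zero_propagates[OF r nonneg bal] \<open>\<nu> x = 0\<close> by blast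
  qed simp
  with nz show False by simp
qed

text \<open>For the largest ratio \<open>c = w x0 / \<mu> x0\<close>, the solution \<open>c \<mu> - w\<close> is nonnegative and vanishes at
  \<open>x0\<close>, hence vanishes everywhere.\<close>
lemma global_balance_proportional:
  fixes r :: "'a::finite \<Rightarrow> 'a \<Rightarrow> real"
  assumes r: "rate_matrix r" and irr: "irreducible_rates r"
    and \<mu>: "\<And>x. \<mu> x > 0" "global_balance r \<mu>" and w: "\<And>x. w x > 0" "global_balance r w"
  shows "\<mu> x / \<mu> y = w x / w y"
proof -
  define c where "c = Max (range (\<lambda>x. w x / \<mu> x))"
  have c_ge: "w x / \<mu> x \<le> c" for x unfolding c_def by (rule Max_ge) auto
  have "c \<in> range (\<lambda>x. w x / \<mu> x)" unfolding c_def by (rule Max_in) auto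
  then obtain x0 where x0: "c = w x0 / \<mu> x0" by auto
  define \<nu> where "\<nu> x = c * \<mu> x - w x" for x
  have nonneg: "\<nu> x \<ge> 0" for x
    using c_ge[of x] \<mu>(1)[of x] by (simp add: \<nu>_def pos_divide_le_eq)
  have bal: "global_balance r \<nu>"
    unfolding global_balance_def
  proof
    fix y
    have "(\<Sum>x\<in>UNIV - {y}. \<nu> x * r x y)
        = c * (\<Sum>x\<in>UNIV - {y}. \<mu> x * r x y) - (\<Sum>x\<in>UNIV - {y}. w x * r x y)"
      by (simp add: \<nu>_def algebra_simps sum_subtractf sum_distrib_left)
    also have "\<dots> = \<nu> y * (\<Sum>z\<in>UNIV - {y}. r y z)"
      using \<mu>(2) w(2) by (simp add: global_balance_def \<nu>_def algebra_simps)
    finally show "(\<Sum>x\<in>UNIV - {y}. \<nu> x * r x y) = \<nu> y * (\<Sum>z\<in>UNIV - {y}. r y z)" .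
  qed
  have "\<nu> x0 = 0" using x0 \<mu>(1)[of x0] by (simp add: \<nu>_def)
  have "\<nu> x = 0" for x
  proof (rule ccontr)
    assume "\<nu> x \<noteq> 0"
    then have "\<nu> x0 > 0" by (rule global_balance_pos[OF r irr nonneg bal])
    with \<open>\<nu> x0 = 0\<close> show False by simp
  qed
  then have w_eq: "w x = c * \<mu> x" for x by (simp add: \<nu>_def)
  then have "c \<noteq> 0" using w(1)[of x] by auto
  then show ?thesis using w_eq \<mu>(1)[of y] by simp
qed

lemma tree_sum_pos:
  fixes r :: "'a::finite \<Rightarrow> 'a \<Rightarrow> real"
  assumes "irreducible_rates r"
  shows "tree_sum (jump_rel r) r x > 0"
proof -
  have "rooted_trees (jump_rel r) x \<noteq> {}"
    using assms by (intro rooted_trees_nonempty) (simp add: irreducible_rates_def)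
  moreover have "tree_weight r x f > 0" if "f \<in> rooted_trees (jump_rel r) x" for f
    unfolding tree_weight_def
    using rooted_tree_edge[OF that] by (intro prod_pos) (auto simp: jump_rel_def)
  ultimately show ?thesis unfolding tree_sum_def by (intro sum_pos) auto
qed

lemma invariant_prob_pos:
  fixes r :: "'a::finite \<Rightarrow> 'a \<Rightarrow> real"
  assumes r: "rate_matrix r" and irr: "irreducible_rates r" and \<mu>: "invariant_prob r \<mu>"
  shows "\<mu> x > 0"
proof -
  obtain z where "\<mu> z \<noteq> 0"
    using \<mu> by (force simp: invariant_prob_def)
  with \<mu> show ?thesis
    by (intro global_balance_pos[OF r irr]) (auto simp: invariant_prob_def global_balance_def)
qed

lemma invariant_prob_ratio:
  fixes r :: "'a::finite \<Rightarrow> 'a \<Rightarrow> real"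
  assumes r: "rate_matrix r" and irr: "irreducible_rates r" and \<mu>: "invariant_prob r \<mu>"
  shows "\<mu> x / \<mu> y = tree_sum (jump_rel r) r x / tree_sum (jump_rel r) r y"
proof -
  have "global_balance r (tree_sum (jump_rel r) r)"
    using r by (intro global_balance_tree_sum) (force simp: jump_rel_def rate_matrix_def)+
  with \<mu> show ?thesis
    using invariant_prob_pos[OF r irr \<mu>] tree_sum_pos[OF irr]
    by (intro global_balance_proportional[OF r irr]) (auto simp: invariant_prob_def global_balance_def)
qed

text \<open>Exponent vector, indexed by edges, of the monomial \<open>tree_weight r x f\<close>.\<close>
definition tree_exponent :: "'a \<Rightarrow> ('a \<Rightarrow> 'a) \<Rightarrow> 'a \<times> 'a \<Rightarrow> nat" where
  "tree_exponent x f p = (if fst p \<noteq> x \<and> snd p = f (fst p) then 1 else 0)"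

lemma rooted_tree_edges:
  assumes "f \<in> rooted_trees B x"
  shows "B \<inter> {p. fst p \<noteq> x \<and> snd p = f (fst p)} = (\<lambda>v. (v, f v)) ` (UNIV - {x})"
  using assms by (auto simp: rooted_trees_def)

lemma tree_exponent_outside:
  assumes "f \<in> rooted_trees B x" "p \<notin> B"
  shows "tree_exponent x f p = 0"
  using assms rooted_tree_edge[OF assms(1), of "fst p"] by (cases p) (auto simp: tree_exponent_def)

lemma sum_tree_exponent:
  fixes B :: "('a::finite \<times> 'a) set"
  assumes f: "f \<in> rooted_trees B x"
  shows "(\<Sum>p\<in>B. tree_exponent x f p) = card (UNIV :: 'a set) - 1"
proof -
  have "(\<Sum>p\<in>B. tree_exponent x f p) = card (B \<inter> {p. fst p \<noteq> x \<and> snd p = f (fst p)})"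
    unfolding tree_exponent_def by (simp add: sum.If_cases)
  also have "\<dots> = card (UNIV - {x})"
    unfolding rooted_tree_edges[OF f] by (rule card_image) (auto simp: inj_on_def)
  finally show ?thesis by (simp add: card_Diff_singleton)
qed

lemma prod_power_tree_exponent:
  fixes B :: "('a::finite \<times> 'a) set"
  assumes f: "f \<in> rooted_trees B x"
  shows "(\<Prod>p\<in>B. r (fst p) (snd p) ^ tree_exponent x f p) = tree_weight r x f"
proof -
  let ?g = "\<lambda>p. r (fst p) (snd p) ^ tree_exponent x f p"
  have "(\<Prod>p\<in>B. ?g p) = (\<Prod>p\<in>B \<inter> {p. fst p \<noteq> x \<and> snd p = f (fst p)}. ?g p)"
    by (rule prod.mono_neutral_right) (auto simp: tree_exponent_def)
  also have "\<dots> = (\<Prod>v\<in>UNIV - {x}. ?g (v, f v))"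
    unfolding rooted_tree_edges[OF f] by (subst prod.reindex) (auto simp: inj_on_def)
  also have "\<dots> = tree_weight r x f"
    unfolding tree_weight_def by (intro prod.cong) (auto simp: tree_exponent_def)
  finally show ?thesis .
qed

lemma jump_rel_bonds:
  assumes A: "assumption_A R" and "N \<ge> 1"
  shows "jump_rel (R N) = bonds R"
proof -
  have "R N x y > 0 \<longleftrightarrow> R 1 x y > 0" if "x \<noteq> y" for x y
    using A that \<open>N \<ge> 1\<close> unfolding assumption_A_def by (metis le_refl less_irrefl)
  then show ?thesis by (auto simp: jump_rel_def bonds_def)
qed

text \<open>Every tree weight is one of the monomials of degree \<open>|E| - 1\<close> in the rates that Assumption A
  orders.\<close>
lemma convergent_arctan_tree_sum_ratio:
  fixes R :: "nat \<Rightarrow> 'a::finite \<Rightarrow> 'a \<Rightarrow> real"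
  assumes A: "assumption_A R" and trees: "\<And>v. rooted_trees (bonds R) v \<noteq> {}" and "x \<noteq> y"
  shows "convergent (\<lambda>N. arctan (tree_sum (bonds R) (R N) x / tree_sum (bonds R) (R N) y))"
proof -
  let ?K = "{k :: 'a \<times> 'a \<Rightarrow> nat. (\<forall>p. p \<notin> bonds R \<longrightarrow> k p = 0) \<and>
                                 (\<Sum>p\<in>bonds R. k p) = card (UNIV :: 'a set) - 1}"
  let ?a = "\<lambda>k N. \<Prod>p\<in>bonds R. R N (fst p) (snd p) ^ k p"
  have "card {x, y} \<le> card (UNIV :: 'a set)" by (rule card_mono) auto
  then have "card (UNIV :: 'a set) - 1 \<ge> 1" using \<open>x \<noteq> y\<close> by simp
  then have O: "ordered_family ?K ?a" using A unfolding assumption_A_def by blast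
  have exps: "tree_exponent v ` rooted_trees (bonds R) v \<subseteq> ?K" for v
    by (auto simp: tree_exponent_outside sum_tree_exponent)
  have "tree_sum (bonds R) (R N) v = (\<Sum>f\<in>rooted_trees (bonds R) v. ?a (tree_exponent v f) N)" for v N
    unfolding tree_sum_def by (intro sum.cong) (simp_all add: prod_power_tree_exponent)
  then show ?thesis
    using ordered_family_sum_ratio[OF O _ trees _ trees exps exps] by simp
qed

theorem lemma3p2:
  fixes R :: "nat \<Rightarrow> 'a::finite \<Rightarrow> 'a \<Rightarrow> real"
    and \<mu> :: "nat \<Rightarrow> 'a \<Rightarrow> real"
  assumes rates: "\<And>N. N \<ge> 1 \<Longrightarrow> rate_matrix (R N)"
    and irred: "\<And>N. N \<ge> 1 \<Longrightarrow> irreducible_rates (R N)"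
    and inv: "\<And>N. N \<ge> 1 \<Longrightarrow> invariant_prob (R N) (\<mu> N)"
    and A: "assumption_A R"
  shows "ordered_family (UNIV :: 'a set) (\<lambda>\<eta> N. \<mu> N \<eta>)"
proof -
  have jump: "jump_rel (R N) = bonds R" if "N \<ge> 1" for N
    using jump_rel_bonds[OF A that] .
  have trees: "rooted_trees (bonds R) v \<noteq> {}" for v
    using irred[of 1] jump[of 1] by (intro rooted_trees_nonempty) (simp add: irreducible_rates_def)
  have "convergent (\<lambda>N. arctan (\<mu> N x / \<mu> N y))" if "x \<noteq> y" for x y
  proof -
    have "\<forall>\<^sub>F N in sequentially. arctan (tree_sum (bonds R) (R N) x / tree_sum (bonds R) (R N) y)
        = arctan (\<mu> N x / \<mu> N y)"
      unfolding eventually_sequentially using invariant_prob_ratio[OF rates irred inv] jump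
      by (intro exI[of _ 1]) auto
    from convergent_cong[OF this] show ?thesis
      using convergent_arctan_tree_sum_ratio[OF A trees that] by simp
  qed
  then show ?thesis
    using invariant_prob_pos[OF rates irred inv] unfolding ordered_family_def by auto
qed

end
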